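(* Let $K$ be a reversible substochastic kernel on a finite probability space $(E,\rho)$, and let $\delta=\rho(1-K1)$. Assume that for all nonnegative $f$, $\operatorname{Ent}_\rho(f^2)\le A\,\mathcal E^\rho_K(f,f)$. Let $T_t=e^{t(K-I)}$ and $u_t=T_tu_0$ for any $u_0\ge0$. Then for all $t\ge0$, \[ H_\rho(u_t)\le e^{-t/A}H_\rho(u_0)+A\delta\,\rho(u_0)(1-e^{-t/A}). \]
   Context: A substochastic kernel is a nonnegative kernel with row sums at most one; reversible means $\rho(x)K(x,y)=\rho(y)K(y,x)$. $\mathcal E^\rho_K(f,f)=\langle f,(I-K)f\rangle_\rho$. $\operatorname{Ent}_\rho(f^2)=\rho(f^2\log f^2)-\rho(f^2)\log\rho(f^2)$. For nonnegative $u$, $H_\rho(u)=\rho\left[u\log\frac{u}{\rho(u)}\right]$ with the convention $0\log0=0$. $1$ denotes the constant function. *)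

theory Defs
  imports "HOL-Analysis.Analysis"
begin

definition kop :: "('a::finite \<Rightarrow> 'a \<Rightarrow> real) \<Rightarrow> ('a \<Rightarrow> real) \<Rightarrow> 'a \<Rightarrow> real" where
  "kop K f = (\<lambda>x. \<Sum>y\<in>UNIV. K x y * f y)"

definition expect :: "('a::finite \<Rightarrow> real) \<Rightarrow> ('a \<Rightarrow> real) \<Rightarrow> real" where
  "expect \<rho> f = (\<Sum>x\<in>UNIV. \<rho> x * f x)"

definition substochastic :: "('a::finite \<Rightarrow> 'a \<Rightarrow> real) \<Rightarrow> bool" where
  "substochastic K \<longleftrightarrow> (\<forall>x y. 0 \<le> K x y) \<and> (\<forall>x. (\<Sum>y\<in>UNIV. K x y) \<le> 1)"

definition reversible :: "('a \<Rightarrow> real) \<Rightarrow> ('a \<Rightarrow> 'a \<Rightarrow> real) \<Rightarrow> bool" where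
  "reversible \<rho> K \<longleftrightarrow> (\<forall>x y. \<rho> x * K x y = \<rho> y * K y x)"

definition prob_fun :: "('a::finite \<Rightarrow> real) \<Rightarrow> bool" where
  "prob_fun \<rho> \<longleftrightarrow> (\<forall>x. 0 \<le> \<rho> x) \<and> (\<Sum>x\<in>UNIV. \<rho> x) = 1"

definition dirichlet :: "('a::finite \<Rightarrow> real) \<Rightarrow> ('a \<Rightarrow> 'a \<Rightarrow> real) \<Rightarrow> ('a \<Rightarrow> real) \<Rightarrow> real" where
  "dirichlet \<rho> K f = expect \<rho> (\<lambda>x. f x * (f x - kop K f x))"

definition xlogx :: "real \<Rightarrow> real" where
  "xlogx s = (if s = 0 then 0 else s * ln s)"

definition Ent :: "('a::finite \<Rightarrow> real) \<Rightarrow> ('a \<Rightarrow> real) \<Rightarrow> real" where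
  "Ent \<rho> g = expect \<rho> (\<lambda>x. xlogx (g x)) - xlogx (expect \<rho> g)"

definition Hent :: "('a::finite \<Rightarrow> real) \<Rightarrow> ('a \<Rightarrow> real) \<Rightarrow> real" where
  "Hent \<rho> u = expect \<rho> (\<lambda>x. if u x = 0 then 0 else u x * ln (u x / expect \<rho> u))"

definition heat :: "('a::finite \<Rightarrow> 'a \<Rightarrow> real) \<Rightarrow> real \<Rightarrow> ('a \<Rightarrow> real) \<Rightarrow> 'a \<Rightarrow> real" where
  "heat K t u = (\<lambda>x. \<Sum>n. t ^ n / fact n * (((\<lambda>f. (\<lambda>z. kop K f z - f z)) ^^ n) u) x)"

end

theory Submission
  imports Defs
begin

text \<open>
  Write u_t = T_t u_0 and F(t) = Ent(u_t). For strictly positive data F is differentiable with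
  F' = \<rho>[(ln u_t - ln \<rho>(u_t)) (K - I) u_t]. Splitting K - I into its off-diagonal part and the
  killing rate 1 - K1, reversibility and (sqrt a - sqrt b)^2 \<le> (a - b)(ln a - ln b) bound the
  first part by -E(sqrt u_t, sqrt u_t), while u (ln m - ln u) \<le> m - u bounds the killed part
  by \<delta> \<rho>(u_t) \<le> \<delta> \<rho>(u_0). The log-Sobolev inequality for sqrt u_t turns this into
  F' \<le> -F/A + \<delta> \<rho>(u_0), and Gronwall's lemma gives the bound.

  Positivity of u_t comes from exp(t(K - I)) = e^(-t) exp(tK), which follows from uniqueness for
  linear ODEs. Nonnegative initial data are reached by adding a constant e > 0 and letting
  e \<rightarrow> 0, using continuity of the entropy.
\<close>

section \<open>Exponential of a kernel\<close>

definition kernel_exp :: "('a::finite \<Rightarrow> 'a \<Rightarrow> real) \<Rightarrow> real \<Rightarrow> ('a \<Rightarrow> real) \<Rightarrow> 'a \<Rightarrow> real" where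
  "kernel_exp M t u = (\<lambda>x. \<Sum>n. t ^ n / fact n * ((kop M ^^ n) u) x)"

definition generator :: "('a \<Rightarrow> 'a \<Rightarrow> real) \<Rightarrow> 'a \<Rightarrow> 'a \<Rightarrow> real" where
  "generator K = (\<lambda>x y. K x y - (if x = y then 1 else 0))"

definition kernel_bound :: "('a::finite \<Rightarrow> 'a \<Rightarrow> real) \<Rightarrow> real" where
  "kernel_bound M = (\<Sum>x\<in>UNIV. \<Sum>y\<in>UNIV. \<bar>M x y\<bar>)"

lemma kop_generator: "kop (generator K) f x = kop K f x - f x"
proof -
  have "(\<Sum>y\<in>UNIV. (if x = y then 1 else 0) * f y) = (\<Sum>y\<in>UNIV. if x = y then f y else 0)"
    by (intro sum.cong) simp_all
  then have "(\<Sum>y\<in>UNIV. (if x = y then 1 else 0) * f y) = f x"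
    by simp
  then show ?thesis
    by (simp add: kop_def generator_def left_diff_distrib sum_subtractf)
qed

lemma heat_eq_kernel_exp: "heat K t u = kernel_exp (generator K) t u"
  unfolding heat_def kernel_exp_def kop_generator[abs_def] ..

lemma kop_add_scaled: "kop M (\<lambda>y. f y + c * g y) x = kop M f x + c * kop M g x"
  by (simp add: kop_def algebra_simps sum.distrib sum_distrib_left)

lemma funpow_kop_add_scaled:
  "(kop M ^^ n) (\<lambda>y. f y + c * g y) x = (kop M ^^ n) f x + c * (kop M ^^ n) g x"
proof (induction n arbitrary: x)
  case (Suc n)
  then have "(kop M ^^ n) (\<lambda>y. f y + c * g y) = (\<lambda>y. (kop M ^^ n) f y + c * (kop M ^^ n) g y)"
    by (intro ext)
  then show ?case by (simp add: kop_add_scaled)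
qed simp

lemma funpow_kop_nonneg:
  assumes "\<And>x y. 0 \<le> M x y" and "\<And>x. 0 \<le> u x"
  shows "0 \<le> (kop M ^^ n) u x"
  using assms by (induction n arbitrary: x) (auto simp: kop_def intro!: sum_nonneg)

lemma abs_kop_le:
  assumes "\<And>y. \<bar>f y\<bar> \<le> B"
  shows "\<bar>kop M f x\<bar> \<le> kernel_bound M * B"
proof -
  have "0 \<le> B" using assms[of undefined] by linarith
  have "\<bar>kop M f x\<bar> \<le> (\<Sum>y\<in>UNIV. \<bar>M x y\<bar> * B)"
    unfolding kop_def
    by (rule order_trans[OF sum_abs sum_mono]) (auto simp: abs_mult intro!: mult_left_mono assms)
  also have "\<dots> \<le> kernel_bound M * B"
    unfolding kernel_bound_def sum_distrib_right[symmetric] using \<open>0 \<le> B\<close>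
    by (intro mult_right_mono member_le_sum[where f = "\<lambda>x. \<Sum>y\<in>UNIV. \<bar>M x y\<bar>"]) (auto intro: sum_nonneg)
  finally show ?thesis .
qed

lemma abs_le_kernel_bound: "\<bar>M x y\<bar> \<le> kernel_bound M"
proof -
  have "\<bar>M x y\<bar> \<le> (\<Sum>y\<in>UNIV. \<bar>M x y\<bar>)"
    by (rule member_le_sum) auto
  also have "\<dots> \<le> kernel_bound M"
    unfolding kernel_bound_def
    by (rule member_le_sum[where f = "\<lambda>x. \<Sum>y\<in>UNIV. \<bar>M x y\<bar>"]) (auto intro: sum_nonneg)
  finally show ?thesis .
qed

lemma abs_funpow_kop_le: "\<bar>(kop M ^^ n) u x\<bar> \<le> kernel_bound M ^ n * (\<Sum>y\<in>UNIV. \<bar>u y\<bar>)"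
proof (induction n arbitrary: x)
  case 0
  show ?case by (simp add: member_le_sum[where f = "\<lambda>y. \<bar>u y\<bar>"])
next
  case (Suc n)
  show ?case
    using abs_kop_le[where M = M and x = x, OF Suc] by (simp add: mult.assoc)
qed

lemma summable_kernel_exp_terms: "summable (\<lambda>n. t ^ n / fact n * (kop M ^^ n) u x)"
proof (rule summable_rabs_cancel, rule summable_comparison_test')
  let ?B = "\<Sum>y\<in>UNIV. \<bar>u y\<bar>"
  show "summable (\<lambda>n. ?B * ((\<bar>t\<bar> * kernel_bound M) ^ n / fact n))"
    using summable_exp[of "\<bar>t\<bar> * kernel_bound M"] by (intro summable_mult) (simp add: field_simps)
  fix n
  have "\<bar>t ^ n / fact n * (kop M ^^ n) u x\<bar> = \<bar>t\<bar> ^ n / fact n * \<bar>(kop M ^^ n) u x\<bar>"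
    by (simp add: abs_mult power_abs)
  also have "\<dots> \<le> \<bar>t\<bar> ^ n / fact n * (kernel_bound M ^ n * ?B)"
    by (intro mult_left_mono abs_funpow_kop_le) auto
  also have "\<dots> = ?B * ((\<bar>t\<bar> * kernel_bound M) ^ n / fact n)"
    by (simp add: power_mult_distrib)
  finally show "norm \<bar>t ^ n / fact n * (kop M ^^ n) u x\<bar> \<le> ?B * ((\<bar>t\<bar> * kernel_bound M) ^ n / fact n)"
    by simp
qed

lemma kernel_exp_0: "kernel_exp M 0 u x = u x"
  using powser_zero[of "\<lambda>n. (kop M ^^ n) u x / fact n"] by (simp add: kernel_exp_def mult.commute)

lemma kernel_exp_add_scaled: "kernel_exp M t (\<lambda>y. f y + c * g y) x = kernel_exp M t f x + c * kernel_exp M t g x"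
proof -
  have "kernel_exp M t (\<lambda>y. f y + c * g y) x
      = (\<Sum>n. t ^ n / fact n * (kop M ^^ n) f x + c * (t ^ n / fact n * (kop M ^^ n) g x))"
    unfolding kernel_exp_def funpow_kop_add_scaled by (simp add: algebra_simps)
  also have "\<dots> = kernel_exp M t f x + c * kernel_exp M t g x"
    unfolding kernel_exp_def
    by (subst suminf_add[symmetric]) (simp_all only: suminf_mult summable_kernel_exp_terms summable_mult)
  finally show ?thesis .
qed

lemma kernel_exp_has_real_derivative:
  "((\<lambda>t. kernel_exp M t u x) has_real_derivative kop M (kernel_exp M t u) x) (at t)"
proof -
  define c where "c n = (kop M ^^ n) u x / fact n" for n
  have series: "(\<lambda>t. kernel_exp M t u x) = (\<lambda>t. \<Sum>n. c n * t ^ n)"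
    unfolding kernel_exp_def c_def by (simp add: mult.commute)
  have "summable (\<lambda>n. c n * s ^ n)" for s
    using summable_kernel_exp_terms[of s M u x] unfolding c_def by (simp add: mult.commute)
  then have termdiffs: "((\<lambda>t. \<Sum>n. c n * t ^ n) has_real_derivative (\<Sum>n. diffs c n * t ^ n)) (at t)"
    by (rule termdiffs_strong_converges_everywhere)
  have "diffs c n * t ^ n = (\<Sum>y\<in>UNIV. M x y * (t ^ n / fact n * (kop M ^^ n) u y))" for n
    unfolding diffs_def c_def
    by (simp add: kop_def sum_distrib_left field_simps del: of_nat_Suc)
  then have "(\<Sum>n. diffs c n * t ^ n) = (\<Sum>y\<in>UNIV. \<Sum>n. M x y * (t ^ n / fact n * (kop M ^^ n) u y))"
    by (simp only: suminf_sum summable_mult summable_kernel_exp_terms)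
  also have "\<dots> = kop M (kernel_exp M t u) x"
    by (simp only: suminf_mult summable_kernel_exp_terms) (simp add: kop_def kernel_exp_def)
  finally show ?thesis using termdiffs unfolding series by simp
qed

lemma kernel_exp_ge_self:
  assumes "\<And>x y. 0 \<le> M x y" and "\<And>x. 0 \<le> u x" and "0 \<le> t"
  shows "u x \<le> kernel_exp M t u x"
  using sum_le_suminf[OF summable_kernel_exp_terms, of "{0}" t M u x] assms
  by (simp add: kernel_exp_def funpow_kop_nonneg)

section \<open>Positivity of the heat semigroup\<close>

lemma gronwall_exp_bound:
  fixes g g' :: "real \<Rightarrow> real"
  assumes "0 \<le> T"
    and deriv: "\<And>t. 0 \<le> t \<Longrightarrow> t \<le> T \<Longrightarrow> (g has_real_derivative g' t) (at t)"
    and growth: "\<And>t. 0 \<le> t \<Longrightarrow> t \<le> T \<Longrightarrow> g' t \<le> a * g t"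
  shows "g T \<le> exp (a * T) * g 0"
proof -
  define h where "h t = exp (- a * t) * g t" for t
  have "(h has_real_derivative exp (- a * t) * (g' t - a * g t)) (at t)"
    if "0 \<le> t" "t \<le> T" for t
    unfolding h_def
    by (rule derivative_eq_intros deriv[OF that] refl | simp)+ (simp add: algebra_simps)
  moreover have "exp (- a * t) * (g' t - a * g t) \<le> 0" if "0 \<le> t" "t \<le> T" for t
    using growth[OF that] by (simp add: mult_nonneg_nonpos)
  ultimately have "h T \<le> h 0"
    by (intro DERIV_nonpos_imp_nonincreasing[OF \<open>0 \<le> T\<close>]) blast
  then have "exp (a * T) * h T \<le> exp (a * T) * g 0"
    by (simp add: h_def)
  then show ?thesis
    by (simp add: h_def mult.assoc[symmetric] exp_add[symmetric])
qed

lemma linear_ode_zero_initial: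
  fixes d :: "real \<Rightarrow> 'a::finite \<Rightarrow> real"
  assumes deriv: "\<And>t x. ((\<lambda>t. d t x) has_real_derivative kop M (d t) x) (at t)"
    and initial: "\<And>x. d 0 x = 0" and "0 \<le> T"
  shows "d T x = 0"
proof -
  define c where "c = kernel_bound M * real CARD('a)"
  define g where "g t = (\<Sum>x\<in>UNIV. (d t x)\<^sup>2)" for t
  define g' where "g' t = (\<Sum>x\<in>UNIV. 2 * d t x * kop M (d t) x)" for t
  have "(g has_real_derivative g' t) (at t)" for t
    unfolding g_def g'_def
    by (rule DERIV_sum, rule DERIV_cong[OF DERIV_power[OF deriv]]) simp
  moreover have "g' t \<le> 2 * c * g t" for t
  proof -
    have "2 * (d t x * M x y * d t y) \<le> kernel_bound M * ((d t x)\<^sup>2 + (d t y)\<^sup>2)" for x y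
    proof -
      have "2 * (d t x * M x y * d t y) \<le> \<bar>M x y\<bar> * (2 * \<bar>d t x\<bar> * \<bar>d t y\<bar>)"
        using abs_ge_self[of "2 * (d t x * M x y * d t y)"] by (simp add: abs_mult algebra_simps)
      also have "\<dots> \<le> \<bar>M x y\<bar> * ((d t x)\<^sup>2 + (d t y)\<^sup>2)"
        using sum_squares_bound[of "\<bar>d t x\<bar>" "\<bar>d t y\<bar>"]
        by (intro mult_left_mono) (auto simp: power2_eq_square)
      also have "\<dots> \<le> kernel_bound M * ((d t x)\<^sup>2 + (d t y)\<^sup>2)"
        by (intro mult_right_mono abs_le_kernel_bound) auto
      finally show ?thesis .
    qed
    then have "g' t \<le> (\<Sum>x\<in>UNIV. \<Sum>y\<in>UNIV. kernel_bound M * ((d t x)\<^sup>2 + (d t y)\<^sup>2))"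
      unfolding g'_def kop_def
      by (auto simp: sum_distrib_left mult.assoc intro!: sum_mono)
    also have "\<dots> = 2 * c * g t"
      by (simp add: c_def g_def sum.distrib sum_distrib_left[symmetric] algebra_simps
                    sum.swap[of "\<lambda>x y. (d t y)\<^sup>2"])
    finally show ?thesis .
  qed
  ultimately have "g T \<le> exp (2 * c * T) * g 0"
    by (intro gronwall_exp_bound[OF \<open>0 \<le> T\<close>])
  then have "g T \<le> 0"
    by (simp add: g_def initial)
  then have "g T = 0"
    unfolding g_def by (intro antisym sum_nonneg) auto
  then have "(d T x)\<^sup>2 = 0"
    unfolding g_def by (subst (asm) sum_nonneg_eq_0_iff) auto
  then show ?thesis by simp
qed

lemma kernel_exp_generator:
  assumes "0 \<le> t"
  shows "kernel_exp (generator M) t u x = exp (- t) * kernel_exp M t u x"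
proof -
  define d where "d t x = kernel_exp (generator M) t u x - exp (- t) * kernel_exp M t u x" for t x
  have "((\<lambda>t. d t x) has_real_derivative kop (generator M) (d t) x) (at t)" for t x
  proof -
    have "((\<lambda>t. d t x) has_real_derivative kop (generator M) (kernel_exp (generator M) t u) x
        - (- exp (- t) * kernel_exp M t u x + exp (- t) * kop M (kernel_exp M t u) x)) (at t)"
      unfolding d_def by (rule derivative_eq_intros kernel_exp_has_real_derivative refl | simp)+
    moreover have "kop (generator M) (kernel_exp (generator M) t u) x
        - (- exp (- t) * kernel_exp M t u x + exp (- t) * kop M (kernel_exp M t u) x) = kop (generator M) (d t) x"
      using kop_add_scaled[of M "kernel_exp (generator M) t u" "- exp (- t)" "kernel_exp M t u" x]
      by (simp add: kop_generator d_def[abs_def])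
    ultimately show ?thesis by simp
  qed
  then have "d t x = 0"
    by (rule linear_ode_zero_initial) (simp_all add: d_def kernel_exp_0 assms)
  then show ?thesis by (simp add: d_def)
qed

lemma heat_0: "heat K 0 u = u"
  by (simp add: heat_eq_kernel_exp kernel_exp_0 fun_eq_iff)

lemma heat_add_scaled: "heat K t (\<lambda>y. f y + c * g y) x = heat K t f x + c * heat K t g x"
  by (simp add: heat_eq_kernel_exp kernel_exp_add_scaled)

lemma heat_has_real_derivative:
  "((\<lambda>t. heat K t u x) has_real_derivative kop K (heat K t u) x - heat K t u x) (at t)"
  using kernel_exp_has_real_derivative[of "generator K" u x t] by (simp add: heat_eq_kernel_exp kop_generator)

lemma heat_ge_exp_scaled:
  assumes "\<And>x y. 0 \<le> K x y" and "\<And>x. 0 \<le> u x" and "0 \<le> t"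
  shows "exp (- t) * u x \<le> heat K t u x"
  unfolding heat_eq_kernel_exp kernel_exp_generator[OF \<open>0 \<le> t\<close>]
  by (intro mult_left_mono kernel_exp_ge_self assms) simp

lemma heat_nonneg:
  assumes "\<And>x y. 0 \<le> K x y" and "\<And>x. 0 \<le> u x" and "0 \<le> t"
  shows "0 \<le> heat K t u x"
  using heat_ge_exp_scaled[of K u t x] assms by (meson exp_ge_zero mult_nonneg_nonneg order_trans)

lemma heat_pos:
  assumes "\<And>x y. 0 \<le> K x y" and "\<And>x. 0 < u x" and "0 \<le> t"
  shows "0 < heat K t u x"
proof -
  have "exp (- t) * u x \<le> heat K t u x"
    using assms by (intro heat_ge_exp_scaled) (auto simp: less_imp_le)
  moreover have "0 < exp (- t) * u x"
    using assms(2)[of x] by simp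
  ultimately show ?thesis by linarith
qed

section \<open>Entropy\<close>

text \<open>Since ln 0 = 0, the case split in the definition of xlogx is redundant.\<close>
lemma xlogx_eq [simp]: "xlogx s = s * ln s"
  by (simp add: xlogx_def)

lemma Hent_eq_Ent:
  assumes "\<And>x. 0 \<le> \<rho> x" and "\<And>x. 0 \<le> u x"
  shows "Hent \<rho> u = Ent \<rho> u"
proof (cases "expect \<rho> u = 0")
  case True
  then have "\<rho> x * u x = 0" for x
    using assms unfolding expect_def by (subst (asm) sum_nonneg_eq_0_iff) auto
  then have "\<rho> x * (if u x = 0 then 0 else u x * ln (u x / c)) = 0"
    and "\<rho> x * xlogx (u x) = 0" for x c
    by (metis mult_eq_0_iff xlogx_eq)+
  then have "Hent \<rho> u = 0" and "expect \<rho> (\<lambda>x. xlogx (u x)) = 0"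
    unfolding Hent_def expect_def by (simp_all only: sum.neutral_const)
  then show ?thesis
    by (simp add: True Ent_def)
next
  case False
  moreover have "0 \<le> expect \<rho> u"
    using assms unfolding expect_def by (simp add: sum_nonneg)
  ultimately have "0 < expect \<rho> u"
    by simp
  define c where "c = ln (expect \<rho> u)"
  have "(if u x = 0 then 0 else u x * ln (u x / expect \<rho> u)) = xlogx (u x) - u x * c" for x
    using assms(2)[of x] \<open>0 < expect \<rho> u\<close> by (auto simp: c_def ln_div right_diff_distrib)
  then have "Hent \<rho> u = expect \<rho> (\<lambda>x. xlogx (u x) - u x * c)"
    unfolding Hent_def by simp
  also have "\<dots> = expect \<rho> (\<lambda>x. xlogx (u x)) - expect \<rho> u * c"
    by (simp add: expect_def right_diff_distrib sum_subtractf sum_distrib_right mult.assoc)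
  finally show ?thesis
    by (simp add: Ent_def c_def)
qed

lemma expect_has_real_derivative:
  assumes "\<And>x. ((\<lambda>s. u s x) has_real_derivative u' x) (at t)"
  shows "((\<lambda>s. expect \<rho> (u s)) has_real_derivative expect \<rho> u') (at t)"
  unfolding expect_def by (intro DERIV_sum DERIV_cmult assms)

lemma Ent_has_real_derivative:
  assumes deriv: "\<And>x. ((\<lambda>s. u s x) has_real_derivative u' x) (at t)"
    and pos: "\<And>x. 0 < u t x" and "0 < expect \<rho> (u t)"
  shows "((\<lambda>s. Ent \<rho> (u s)) has_real_derivative
           expect \<rho> (\<lambda>x. (ln (u t x) - ln (expect \<rho> (u t))) * u' x)) (at t)"
proof -
  have "((\<lambda>s. u s x * ln (u s x)) has_real_derivative (ln (u t x) + 1) * u' x) (at t)" for x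
    using deriv[of x] pos[of x] by (auto intro!: derivative_eq_intros simp: field_simps)
  then have "((\<lambda>s. expect \<rho> (\<lambda>x. u s x * ln (u s x))) has_real_derivative
      expect \<rho> (\<lambda>x. (ln (u t x) + 1) * u' x)) (at t)"
    by (rule expect_has_real_derivative)
  moreover have "((\<lambda>s. expect \<rho> (u s) * ln (expect \<rho> (u s))) has_real_derivative
      (ln (expect \<rho> (u t)) + 1) * expect \<rho> u') (at t)"
    using assms
    by (auto intro!: derivative_eq_intros expect_has_real_derivative simp: algebra_simps)
  ultimately have "((\<lambda>s. Ent \<rho> (u s)) has_real_derivative
      expect \<rho> (\<lambda>x. (ln (u t x) + 1) * u' x) - (ln (expect \<rho> (u t)) + 1) * expect \<rho> u') (at t)"
    unfolding Ent_def xlogx_eq by (rule DERIV_diff)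
  then show ?thesis
    by (simp add: expect_def algebra_simps sum_subtractf sum.distrib sum_distrib_right)
qed

lemma continuous_on_xlogx: "continuous_on {0..} xlogx"
proof -
  have "continuous (at s within {0..}) (\<lambda>s. s * ln s)" if "0 \<le> s" for s :: real
  proof (cases "s = 0")
    case True
    have "((\<lambda>s. ln (inverse s) / inverse s) \<longlongrightarrow> 0) (at_right (0::real))"
      using ln_x_over_x_tendsto_0 unfolding filterlim_at_top_to_right .
    then have "((\<lambda>s::real. s * ln s) \<longlongrightarrow> 0) (at_right 0)"
      by (simp add: ln_inverse divide_inverse mult.commute tendsto_minus_cancel_left[symmetric])
    then show ?thesis
      by (simp add: True continuous_within at_within_Ici_at_right)
  next
    case False
    with that have "isCont (\<lambda>s. s * ln s) s"
      by (auto intro!: continuous_intros)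
    then show ?thesis
      by (rule continuous_at_imp_continuous_at_within)
  qed
  then show ?thesis
    by (simp add: continuous_on_eq_continuous_within)
qed

lemma tendsto_Ent:
  assumes "\<And>x. 0 \<le> \<rho> x"
    and lim: "\<And>x. ((\<lambda>e. f e x) \<longlongrightarrow> g x) F"
    and "\<forall>\<^sub>F e in F. \<forall>x. 0 \<le> f e x" and "\<And>x. 0 \<le> g x"
  shows "((\<lambda>e. Ent \<rho> (f e)) \<longlongrightarrow> Ent \<rho> g) F"
proof -
  have "((\<lambda>e. xlogx (f e x)) \<longlongrightarrow> xlogx (g x)) F" for x
    using assms(3)
    by (intro continuous_on_tendsto_compose[OF continuous_on_xlogx lim])
       (auto simp del: xlogx_eq simp: assms(4) elim: eventually_mono)
  then have "((\<lambda>e. expect \<rho> (\<lambda>x. xlogx (f e x))) \<longlongrightarrow> expect \<rho> (\<lambda>x. xlogx (g x))) F"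
    unfolding expect_def by (intro tendsto_intros)
  moreover have "((\<lambda>e. xlogx (expect \<rho> (f e))) \<longlongrightarrow> xlogx (expect \<rho> g)) F"
  proof (rule continuous_on_tendsto_compose[OF continuous_on_xlogx])
    show "((\<lambda>e. expect \<rho> (f e)) \<longlongrightarrow> expect \<rho> g) F"
      unfolding expect_def by (intro tendsto_intros lim)
    show "expect \<rho> g \<in> {0..}"
      by (auto simp: expect_def assms intro!: sum_nonneg)
    show "\<forall>\<^sub>F e in F. expect \<rho> (f e) \<in> {0..}"
      using assms(3) by eventually_elim (auto simp: expect_def assms(1) intro!: sum_nonneg)
  qed
  ultimately show ?thesis
    unfolding Ent_def by (rule tendsto_diff)
qed

section \<open>Entropy production\<close>

lemma sqrt_diff_squared_le:
  fixes a b :: real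
  assumes "0 < a" and "0 < b"
  shows "(sqrt a - sqrt b)\<^sup>2 \<le> (ln a - ln b) * (a - b)"
proof -
  have "(sqrt a - sqrt b)\<^sup>2 \<le> (ln a - ln b) * (a - b)" if "0 < b" "b \<le> a" for a b :: real
  proof -
    have "ln (b / a) \<le> b / a - 1"
      using that by (intro ln_le_minus_one) auto
    then have "(a - b) / a \<le> ln a - ln b"
      using that by (simp add: ln_div field_simps)
    then have "(a - b) / a * (a - b) \<le> (ln a - ln b) * (a - b)"
      using that by (intro mult_right_mono) auto
    moreover have "(sqrt a - sqrt b)\<^sup>2 * a \<le> (a - b) * (a - b)"
    proof -
      have "(sqrt a)\<^sup>2 = a" "(sqrt b)\<^sup>2 = b"
        using that by auto
      then have "a - b = (sqrt a - sqrt b) * (sqrt a + sqrt b)"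
        by (simp add: algebra_simps power2_eq_square)
      then have "(a - b) * (a - b) = ((sqrt a - sqrt b) * (sqrt a + sqrt b))\<^sup>2"
        by (simp only: power2_eq_square)
      also have "\<dots> = (sqrt a - sqrt b)\<^sup>2 * (sqrt a + sqrt b)\<^sup>2"
        by (rule power_mult_distrib)
      finally have "(a - b) * (a - b) = (sqrt a - sqrt b)\<^sup>2 * (sqrt a + sqrt b)\<^sup>2" .
      moreover have "a \<le> (sqrt a + sqrt b)\<^sup>2"
        using \<open>(sqrt a)\<^sup>2 = a\<close> \<open>(sqrt b)\<^sup>2 = b\<close> that by (simp add: power2_eq_square algebra_simps)
      ultimately show ?thesis
        by (simp add: mult_left_mono)
    qed
    then have "(sqrt a - sqrt b)\<^sup>2 \<le> (a - b) / a * (a - b)"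
      using that by (simp add: pos_le_divide_eq)
    ultimately show ?thesis
      by linarith
  qed
  from this[of b a] this[of a b] assms show ?thesis
    by (cases "b \<le> a") (auto simp: power2_commute algebra_simps)
qed

lemma mult_ln_diff_le:
  fixes u m :: real
  assumes "0 < u" and "0 < m"
  shows "u * (ln m - ln u) \<le> m - u"
proof -
  have "u * ln (m / u) \<le> u * (m / u - 1)"
    using assms by (intro mult_left_mono ln_le_minus_one) auto
  moreover have "u * ln (m / u) = u * (ln m - ln u)" and "u * (m / u - 1) = m - u"
    using assms by (simp_all add: ln_div field_simps)
  ultimately show ?thesis by simp
qed

lemma reversible_double_sum_swap:
  assumes "reversible \<rho> K"
  shows "(\<Sum>x\<in>UNIV. \<Sum>y\<in>UNIV. \<rho> x * K x y * G x y) = (\<Sum>x\<in>UNIV. \<Sum>y\<in>UNIV. \<rho> x * K x y * G y x)"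
  using assms unfolding reversible_def by (subst sum.swap) simp

lemma reversible_double_sum_nonpos:
  assumes "\<And>x. 0 \<le> \<rho> x" and "\<And>x y. 0 \<le> K x y" and "reversible \<rho> K"
    and "\<And>x y. G x y + G y x \<le> 0"
  shows "(\<Sum>x\<in>UNIV. \<Sum>y\<in>UNIV. \<rho> x * K x y * G x y) \<le> 0"
proof -
  have "2 * (\<Sum>x\<in>UNIV. \<Sum>y\<in>UNIV. \<rho> x * K x y * G x y)
      = (\<Sum>x\<in>UNIV. \<Sum>y\<in>UNIV. \<rho> x * K x y * (G x y + G y x))"
    using reversible_double_sum_swap[OF assms(3), of G] by (simp add: sum.distrib algebra_simps)
  also have "\<dots> \<le> 0"
    by (intro sum_nonpos mult_nonneg_nonpos mult_nonneg_nonneg assms)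
  finally show ?thesis by simp
qed

lemma entropy_production_le:
  assumes "\<And>x. 0 \<le> \<rho> x" and "substochastic K" and "reversible \<rho> K"
    and u: "\<And>x. 0 < u x" and "0 < m"
  shows "expect \<rho> (\<lambda>x. (ln (u x) - ln m) * (kop K u x - u x)) + dirichlet \<rho> K (\<lambda>x. sqrt (u x))
           \<le> expect \<rho> (\<lambda>x. 1 - kop K (\<lambda>_. 1) x) * m"
proof -
  define l where "l x = ln (u x) - ln m" for x
  define s where "s x = sqrt (u x)" for x
  define G where "G x y = l x * (u y - u x) + s x * (s x - s y)" for x y
  \<comment> \<open>k is the killing rate; the remaining K-part is symmetrised in (x, y) by reversibility\<close>
  define k where "k x = 1 - (\<Sum>y\<in>UNIV. K x y)" for x
  have K: "\<And>x y. 0 \<le> K x y" "\<And>x. 0 \<le> k x"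
    using assms(2) by (auto simp: substochastic_def k_def)
  have s_sq: "s x * s x = u x" for x
    using u[of x] by (simp add: s_def)
  have "\<rho> x * (l x * (kop K u x - u x)) + \<rho> x * (s x * (s x - kop K s x))
      = (\<Sum>y\<in>UNIV. \<rho> x * K x y * G x y) + \<rho> x * k x * (u x - u x * l x)" for x
    unfolding G_def kop_def k_def
    by (simp add: sum_distrib_left sum_distrib_right sum.distrib sum_subtractf algebra_simps s_sq)
  then have "expect \<rho> (\<lambda>x. (ln (u x) - ln m) * (kop K u x - u x)) + dirichlet \<rho> K (\<lambda>x. sqrt (u x))
      = (\<Sum>x\<in>UNIV. \<Sum>y\<in>UNIV. \<rho> x * K x y * G x y) + (\<Sum>x\<in>UNIV. \<rho> x * k x * (u x - u x * l x))"
    unfolding dirichlet_def expect_def l_def[symmetric] s_def[symmetric]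
    by (simp add: sum.distrib[symmetric])
  also have "(\<Sum>x\<in>UNIV. \<Sum>y\<in>UNIV. \<rho> x * K x y * G x y) \<le> 0"
  proof (rule reversible_double_sum_nonpos[OF assms(1) K(1) assms(3)])
    fix x y
    have "G x y + G y x = (s x - s y)\<^sup>2 - (ln (u x) - ln (u y)) * (u x - u y)"
      unfolding G_def l_def by (simp add: power2_eq_square algebra_simps s_sq)
    then show "G x y + G y x \<le> 0"
      using sqrt_diff_squared_le[OF u[of x] u[of y]] by (simp add: s_def)
  qed
  also have "(\<Sum>x\<in>UNIV. \<rho> x * k x * (u x - u x * l x)) \<le> (\<Sum>x\<in>UNIV. \<rho> x * k x * m)"
    using mult_ln_diff_le[OF u \<open>0 < m\<close>]
    by (intro sum_mono mult_left_mono mult_nonneg_nonneg assms K) (simp add: l_def algebra_simps)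
  also have "(\<Sum>x\<in>UNIV. \<rho> x * k x * m) = expect \<rho> (\<lambda>x. 1 - kop K (\<lambda>_. 1) x) * m"
    by (simp add: expect_def kop_def k_def sum_distrib_right)
  finally show ?thesis by simp
qed

lemma entropy_dissipation_le:
  assumes "\<And>x. 0 \<le> \<rho> x" and K: "substochastic K" "reversible \<rho> K" and "0 < A"
    and log_sobolev: "\<And>f. (\<forall>x. 0 \<le> f x) \<Longrightarrow> Ent \<rho> (\<lambda>x. (f x)\<^sup>2) \<le> A * dirichlet \<rho> K f"
    and u: "\<And>x. 0 < u x" and "0 < expect \<rho> u"
  shows "expect \<rho> (\<lambda>x. (ln (u x) - ln (expect \<rho> u)) * (kop K u x - u x))
           \<le> expect \<rho> (\<lambda>x. 1 - kop K (\<lambda>_. 1) x) * expect \<rho> u - Ent \<rho> u / A"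
proof -
  have "Ent \<rho> u = Ent \<rho> (\<lambda>x. (sqrt (u x))\<^sup>2)"
    using u by (simp add: less_imp_le)
  also have "\<dots> \<le> A * dirichlet \<rho> K (\<lambda>x. sqrt (u x))"
    using u by (intro log_sobolev) (simp add: less_imp_le)
  finally have "Ent \<rho> u / A \<le> dirichlet \<rho> K (\<lambda>x. sqrt (u x))"
    using \<open>0 < A\<close> by (simp add: field_simps)
  with entropy_production_le[where u = u, OF assms(1) K u \<open>0 < expect \<rho> u\<close>] show ?thesis
    by linarith
qed

section \<open>Entropy decay along the heat semigroup\<close>

lemma expect_pos:
  assumes "prob_fun \<rho>" and "\<And>x. 0 < f x"
  shows "0 < expect \<rho> f"
proof -
  obtain x where "0 < \<rho> x"
    using assms(1) unfolding prob_fun_def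
    by (metis order_le_less sum.neutral zero_neq_one)
  then have "0 < \<rho> x * f x"
    using assms(2) by simp
  also have "\<dots> \<le> expect \<rho> f"
    using assms unfolding expect_def prob_fun_def
    by (intro member_le_sum) (auto intro: mult_nonneg_nonneg less_imp_le)
  finally show ?thesis .
qed

lemma expect_kop_le:
  assumes "\<And>x. 0 \<le> \<rho> x" and "substochastic K" and "reversible \<rho> K" and "\<And>x. 0 \<le> u x"
  shows "expect \<rho> (kop K u) \<le> expect \<rho> u"
proof -
  have "expect \<rho> (kop K u) = (\<Sum>x\<in>UNIV. \<Sum>y\<in>UNIV. \<rho> x * K x y * u y)"
    by (simp add: expect_def kop_def sum_distrib_left mult.assoc)
  also have "\<dots> = (\<Sum>x\<in>UNIV. \<rho> x * u x * (\<Sum>y\<in>UNIV. K x y))"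
    using reversible_double_sum_swap[OF assms(3), of "\<lambda>x y. u y"]
    by (simp add: sum_distrib_left algebra_simps)
  also have "\<dots> \<le> (\<Sum>x\<in>UNIV. \<rho> x * u x * 1)"
    using assms(2) unfolding substochastic_def
    by (intro sum_mono mult_left_mono) (auto intro: assms mult_nonneg_nonneg)
  finally show ?thesis
    by (simp add: expect_def)
qed

lemma expect_heat_le:
  assumes "\<And>x. 0 \<le> \<rho> x" and K: "substochastic K" "reversible \<rho> K"
    and "\<And>x. 0 \<le> w x" and "0 \<le> T"
  shows "expect \<rho> (heat K T w) \<le> expect \<rho> w"
proof -
  have "0 \<le> heat K t w x" if "0 \<le> t" for t x
    using assms that by (intro heat_nonneg) (auto simp: substochastic_def)
  then have "expect \<rho> (\<lambda>x. kop K (heat K t w) x - heat K t w x) \<le> 0" if "0 \<le> t" for t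
    using expect_kop_le[OF assms(1) K, of "heat K t w"] that
    by (simp add: expect_def sum_subtractf right_diff_distrib)
  then have "expect \<rho> (heat K T w) \<le> exp (0 * T) * expect \<rho> (heat K 0 w)"
    by (intro gronwall_exp_bound[OF \<open>0 \<le> T\<close>, where
          g' = "\<lambda>t. expect \<rho> (\<lambda>x. kop K (heat K t w) x - heat K t w x)"]
          expect_has_real_derivative heat_has_real_derivative) auto
  then show ?thesis
    by (simp add: heat_0)
qed

lemma Ent_heat_le_pos:
  assumes \<rho>: "prob_fun \<rho>" and K: "substochastic K" "reversible \<rho> K" and "0 < A"
    and log_sobolev: "\<And>f. (\<forall>x. 0 \<le> f x) \<Longrightarrow> Ent \<rho> (\<lambda>x. (f x)\<^sup>2) \<le> A * dirichlet \<rho> K f"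
    and w: "\<And>x. 0 < w x" and "0 \<le> T"
  shows "Ent \<rho> (heat K T w)
           \<le> exp (- T / A) * Ent \<rho> w
             + A * expect \<rho> (\<lambda>x. 1 - kop K (\<lambda>_. 1) x) * expect \<rho> w * (1 - exp (- T / A))"
proof -
  have \<rho>0: "\<And>x. 0 \<le> \<rho> x" and K0: "\<And>x y. 0 \<le> K x y"
    using \<rho> K by (auto simp: prob_fun_def substochastic_def)
  define \<delta> where "\<delta> = expect \<rho> (\<lambda>x. 1 - kop K (\<lambda>_. 1) x)"
  define u where "u t = heat K t w" for t
  define P where "P t = expect \<rho> (\<lambda>x. (ln (u t x) - ln (expect \<rho> (u t))) * (kop K (u t) x - u t x))" for t
  have u_pos: "\<And>x. 0 < u t x" if "0 \<le> t" for t
    unfolding u_def using K0 w that by (blast intro: heat_pos)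
  have mass_pos: "0 < expect \<rho> (u t)" if "0 \<le> t" for t
    using expect_pos[OF \<rho> u_pos[OF that]] .
  have "((\<lambda>s. Ent \<rho> (u s) - A * \<delta> * expect \<rho> w) has_real_derivative P t) (at t)" if "0 \<le> t" for t
    unfolding P_def u_def
    by (intro DERIV_diff[where E = 0, simplified] DERIV_const Ent_has_real_derivative
          heat_has_real_derivative u_pos[unfolded u_def] mass_pos[unfolded u_def] that)
  moreover have "P t \<le> - 1 / A * (Ent \<rho> (u t) - A * \<delta> * expect \<rho> w)" if "0 \<le> t" for t
  proof -
    have "P t \<le> \<delta> * expect \<rho> (u t) - Ent \<rho> (u t) / A"
      unfolding P_def \<delta>_def
      by (rule entropy_dissipation_le[where u = "u t", OF \<rho>0 K \<open>0 < A\<close> log_sobolev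
            u_pos[OF that] mass_pos[OF that]])
    moreover have "\<delta> * expect \<rho> (u t) \<le> \<delta> * expect \<rho> w"
      using K(1) \<rho>0 expect_heat_le[OF \<rho>0 K, of w t] w that
      by (intro mult_left_mono)
         (auto simp: u_def \<delta>_def expect_def kop_def substochastic_def less_imp_le intro!: sum_nonneg)
    ultimately have "P t \<le> \<delta> * expect \<rho> w - Ent \<rho> (u t) / A"
      by linarith
    also have "\<dots> = - 1 / A * (Ent \<rho> (u t) - A * \<delta> * expect \<rho> w)"
      using \<open>0 < A\<close> by (simp add: field_simps)
    finally show ?thesis .
  qed
  ultimately have "Ent \<rho> (u T) - A * \<delta> * expect \<rho> w
      \<le> exp (- 1 / A * T) * (Ent \<rho> (u 0) - A * \<delta> * expect \<rho> w)"
    by (intro gronwall_exp_bound[OF \<open>0 \<le> T\<close>])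
  then show ?thesis
    by (simp add: u_def heat_0 \<delta>_def algebra_simps)
qed

lemma Ent_heat_le:
  assumes \<rho>: "prob_fun \<rho>" and K: "substochastic K" "reversible \<rho> K" and "0 < A"
    and "\<And>f. (\<forall>x. 0 \<le> f x) \<Longrightarrow> Ent \<rho> (\<lambda>x. (f x)\<^sup>2) \<le> A * dirichlet \<rho> K f"
    and w: "\<And>x. 0 \<le> w x" and "0 \<le> T"
  shows "Ent \<rho> (heat K T w)
           \<le> exp (- T / A) * Ent \<rho> w
             + A * expect \<rho> (\<lambda>x. 1 - kop K (\<lambda>_. 1) x) * expect \<rho> w * (1 - exp (- T / A))"
proof -
  have \<rho>0: "\<And>x. 0 \<le> \<rho> x" and K0: "\<And>x y. 0 \<le> K x y"
    using \<rho> K by (auto simp: prob_fun_def substochastic_def)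
  define \<delta> where "\<delta> = expect \<rho> (\<lambda>x. 1 - kop K (\<lambda>_. 1) x)"
  \<comment> \<open>the factor 1 makes heat_add_scaled applicable\<close>
  define v where "v e = (\<lambda>x. w x + e * 1)" for e :: real
  have heat_v: "heat K T (v e) = (\<lambda>x. heat K T w x + e * heat K T (\<lambda>_. 1) x)" for e
    unfolding v_def by (intro ext) (rule heat_add_scaled)
  have lim: "((\<lambda>e. a + e * b) \<longlongrightarrow> a) (at_right 0)" for a b :: real
    by (auto intro!: tendsto_eq_intros)
  have "\<forall>\<^sub>F e in at_right 0. Ent \<rho> (heat K T (v e))
      \<le> exp (- T / A) * Ent \<rho> (v e) + A * \<delta> * expect \<rho> (v e) * (1 - exp (- T / A))"
    by (rule eventually_mono[OF eventually_at_right_less])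
       (unfold \<delta>_def, intro Ent_heat_le_pos assms, auto simp: v_def add_nonneg_pos w)
  moreover have "0 \<le> heat K T w x" and "0 \<le> heat K T (\<lambda>_. 1) x" for x
    using K0 w \<open>0 \<le> T\<close> by (simp_all add: heat_nonneg)
  then have "((\<lambda>e. Ent \<rho> (heat K T (v e))) \<longlongrightarrow> Ent \<rho> (heat K T w)) (at_right 0)"
    unfolding heat_v
    by (intro tendsto_Ent lim \<rho>0 eventually_mono[OF eventually_at_right_less]) auto
  moreover have "((\<lambda>e. Ent \<rho> (v e)) \<longlongrightarrow> Ent \<rho> w) (at_right 0)"
    unfolding v_def
    by (intro tendsto_Ent lim \<rho>0 eventually_mono[OF eventually_at_right_less]) (auto simp: w)
  moreover have "((\<lambda>e. expect \<rho> (v e)) \<longlongrightarrow> expect \<rho> w) (at_right 0)"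
    unfolding v_def expect_def by (intro tendsto_intros lim)
  ultimately show ?thesis
    unfolding \<delta>_def[symmetric]
    by (intro tendsto_le[OF trivial_limit_at_right_real]) (auto intro!: tendsto_intros)
qed

theorem lemma2p4:
  fixes \<rho> :: "'a::finite \<Rightarrow> real" and K :: "'a \<Rightarrow> 'a \<Rightarrow> real"
    and A t :: real and u0 :: "'a \<Rightarrow> real"
  assumes "prob_fun \<rho>" and "substochastic K" and "reversible \<rho> K"
    and "0 < A"
    and "\<And>f. (\<forall>x. 0 \<le> f x) \<Longrightarrow> Ent \<rho> (\<lambda>x. (f x)^2) \<le> A * dirichlet \<rho> K f"
    and "\<forall>x. 0 \<le> u0 x" and "0 \<le> t"
  shows "Hent \<rho> (heat K t u0)
           \<le> exp (- t / A) * Hent \<rho> u0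
             + A * expect \<rho> (\<lambda>x. 1 - kop K (\<lambda>_. 1) x) * expect \<rho> u0 * (1 - exp (- t / A))"
proof -
  have \<rho>0: "\<And>x. 0 \<le> \<rho> x" and K0: "\<And>x y. 0 \<le> K x y" and u0: "\<And>x. 0 \<le> u0 x"
    using assms(1,2,6) by (auto simp: prob_fun_def substochastic_def)
  have "0 \<le> heat K t u0 x" for x
    using K0 u0 \<open>0 \<le> t\<close> by (simp add: heat_nonneg)
  then have "Hent \<rho> u0 = Ent \<rho> u0" and "Hent \<rho> (heat K t u0) = Ent \<rho> (heat K t u0)"
    using u0 by (simp_all add: Hent_eq_Ent \<rho>0)
  with Ent_heat_le[OF assms(1-5) u0 \<open>0 \<le> t\<close>] show ?thesis
    by simp
qed

end
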